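(* (Type safety of DCC.) If $\Delta;\cdot\vdash M:A$ in DCC, then $\Delta\vdash M\triangleright^* v$ for some irreducible value $v$.
   Context: DCC (Defunctionalized Calculus of Constructions): expressions $A,B,L,M,N::=x\mid U_i\mid\Pi x{:}A.B\mid L@M\mid\ell_i\{\overline M\}$, where $\ell_i$ ($i\in\mathbb N$) are label names disjoint from variables and $\overline M=M_1,\dots,M_n$ ($n\ge0$). Type contexts $\Gamma::=\cdot\mid\Gamma,x{:}A$; label contexts $\Delta::=\cdot\mid\Delta,\ell_i(\{\overline x{:}\overline A\},x{:}A\mapsto M:B)$ recording a free-variable telescope, an argument, a body and a result type. Substitution is standard with $\ell\{\overline M\}[N/x]=\ell\{\overline{M[N/x]}\}$; $[\overline M/\overline x]=[M_1/x_1,\dots,M_n/x_n]$. The only reduction rule: $\Delta\vdash\ell\{\overline M\}@N\triangleright L[\overline M/\overline x,N/x]$ when $\ell(\{\overline x{:}\overline A\},x{:}A\mapsto L:B)\in\Delta$; $\triangleright^*$ is zero or more steps. Equivalence $\Delta\vdash M\equiv N$: common reduct; or $\Delta\vdash L\triangleright^*\ell\{\overline N\}$, $\Delta\vdash M\triangleright^*M'$, $\ell(\{\overline x{:}\overline A\},x{:}A\mapsto N:B)\in\Delta$, $\Delta\vdash N[\overline N/\overline x]\equiv M'@x$ give $\Delta\vdash L\equiv M$; or symmetrically. Typing $\Delta;\Gamma\vdash M:A$ and formation $\vdash\Delta;\Gamma$ (mutual): variables ($x{:}A\in\Gamma$, $\vdash\Delta;\Gamma$), $U_i:U_{i+1}$,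 $\Pi x{:}A.B:U_{\max(i,j)}$ when $A:U_i$ and $B:U_j$ under $x{:}A$, application $M@N:B[N/x]$ when $M:\Pi x{:}A.B$ and $N:A$, conversion along $\equiv$ to a type $B:U_i$, and labels: if $\vdash\Delta;\Gamma$, $\ell(\{\overline x{:}\overline A\},x{:}A\mapsto M:B)\in\Delta$, $|\overline M|=|\overline x|$ and $\Delta;\Gamma\vdash M_k:A_k[M_1/x_1,\dots,M_{k-1}/x_{k-1}]$ for all $k$, then $\Delta;\Gamma\vdash\ell\{\overline M\}:\Pi x{:}A[\overline M/\overline x].B[\overline M/\overline x]$. Formation: $\vdash\cdot;\cdot$; a fresh label entry $\ell(\{\overline x{:}\overline A\},x{:}A\mapsto M:B)$ may be added when $\Delta;\overline x{:}\overline A\vdash\Pi x{:}A.B:U_i$ and $\Delta;\overline x{:}\overline A,x{:}A\vdash M:B$; $\vdash\Delta;\Gamma$ and $\Delta;\Gamma\vdash A:U_i$ give $\vdash\Delta;\Gamma,x{:}A$. *)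

theory Defs
  imports Main
begin

datatype trm =
    Var nat
  | U nat
  | Pi trm trm           (* Pi x:A. B ; B binds index 0 *)
  | App trm trm
  | Lab nat "trm list"

primrec ren :: "(nat \<Rightarrow> nat) \<Rightarrow> trm \<Rightarrow> trm" where
  "ren f (Var i) = Var (f i)"
| "ren f (U i) = U i"
| "ren f (Pi A B) = Pi (ren f A) (ren (\<lambda>j. case j of 0 \<Rightarrow> 0 | Suc k \<Rightarrow> Suc (f k)) B)"
| "ren f (App M N) = App (ren f M) (ren f N)"
| "ren f (Lab l Ms) = Lab l (map (ren f) Ms)"

definition lift :: "trm \<Rightarrow> trm" where
  "lift = ren Suc"

definition up :: "(nat \<Rightarrow> trm) \<Rightarrow> nat \<Rightarrow> trm" where
  "up \<sigma> = (\<lambda>j. case j of 0 \<Rightarrow> Var 0 | Suc k \<Rightarrow> lift (\<sigma> k))"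

primrec subst :: "(nat \<Rightarrow> trm) \<Rightarrow> trm \<Rightarrow> trm" where
  "subst \<sigma> (Var i) = \<sigma> i"
| "subst \<sigma> (U i) = U i"
| "subst \<sigma> (Pi A B) = Pi (subst \<sigma> A) (subst (up \<sigma>) B)"
| "subst \<sigma> (App M N) = App (subst \<sigma> M) (subst \<sigma> N)"
| "subst \<sigma> (Lab l Ms) = Lab l (map (subst \<sigma>) Ms)"

text \<open>Simultaneous substitution [M_1/x_1,...,M_n/x_n] for a telescope x_1,...,x_n
  (x_n is the innermost variable, i.e. de Bruijn index 0).\<close>
definition inst :: "trm list \<Rightarrow> nat \<Rightarrow> trm" where
  "inst Ms = (\<lambda>j. if j < length Ms then rev Ms ! j else Var (j - length Ms))"

text \<open>Label contexts: entries (l, telescope types A_1..A_n, argument type A, body M, result type B).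
  The telescope type A_k lives in the context x_1..x_(k-1); A in x_1..x_n;
  M and B in x_1..x_n,x.\<close>
type_synonym lctx = "(nat \<times> trm list \<times> trm \<times> trm \<times> trm) list"

text \<open>Type contexts: lists of types, head = most recently bound variable (index 0).\<close>
type_synonym tctx = "trm list"

inductive red :: "lctx \<Rightarrow> trm \<Rightarrow> trm \<Rightarrow> bool" where
  beta: "(l, As, A, L, B) \<in> set \<Delta> \<Longrightarrow> length Ms = length As \<Longrightarrow>
         red \<Delta> (App (Lab l Ms) N) (subst (inst (Ms @ [N])) L)"
| piL: "red \<Delta> A A' \<Longrightarrow> red \<Delta> (Pi A B) (Pi A' B)"
| piR: "red \<Delta> B B' \<Longrightarrow> red \<Delta> (Pi A B) (Pi A B')"
| appL: "red \<Delta> M M' \<Longrightarrow> red \<Delta> (App M N) (App M' N)"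
| appR: "red \<Delta> N N' \<Longrightarrow> red \<Delta> (App M N) (App M N')"
| lab: "k < length Ms \<Longrightarrow> red \<Delta> (Ms ! k) M' \<Longrightarrow> red \<Delta> (Lab l Ms) (Lab l (Ms[k := M']))"

definition reds :: "lctx \<Rightarrow> trm \<Rightarrow> trm \<Rightarrow> bool" where
  "reds \<Delta> = (red \<Delta>)\<^sup>*\<^sup>*"

inductive equiv :: "lctx \<Rightarrow> trm \<Rightarrow> trm \<Rightarrow> bool" where
  common: "reds \<Delta> M L \<Longrightarrow> reds \<Delta> N L \<Longrightarrow> equiv \<Delta> M N"
| eta1: "reds \<Delta> L (Lab l Ns) \<Longrightarrow> reds \<Delta> M M' \<Longrightarrow> (l, As, A, N, B) \<in> set \<Delta> \<Longrightarrow>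
         equiv \<Delta> (subst (up (inst Ns)) N) (App (lift M') (Var 0)) \<Longrightarrow> equiv \<Delta> L M"
| eta2: "reds \<Delta> L (Lab l Ns) \<Longrightarrow> reds \<Delta> M M' \<Longrightarrow> (l, As, A, N, B) \<in> set \<Delta> \<Longrightarrow>
         equiv \<Delta> (subst (up (inst Ns)) N) (App (lift M') (Var 0)) \<Longrightarrow> equiv \<Delta> M L"

inductive typing :: "lctx \<Rightarrow> tctx \<Rightarrow> trm \<Rightarrow> trm \<Rightarrow> bool"
  and wf :: "lctx \<Rightarrow> tctx \<Rightarrow> bool" where
  t_var: "i < length \<Gamma> \<Longrightarrow> wf \<Delta> \<Gamma> \<Longrightarrow> typing \<Delta> \<Gamma> (Var i) (ren (\<lambda>j. j + Suc i) (\<Gamma> ! i))"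
| t_univ: "wf \<Delta> \<Gamma> \<Longrightarrow> typing \<Delta> \<Gamma> (U i) (U (Suc i))"
| t_pi: "typing \<Delta> \<Gamma> A (U i) \<Longrightarrow> typing \<Delta> (A # \<Gamma>) B (U j) \<Longrightarrow>
         typing \<Delta> \<Gamma> (Pi A B) (U (max i j))"
| t_app: "typing \<Delta> \<Gamma> M (Pi A B) \<Longrightarrow> typing \<Delta> \<Gamma> N A \<Longrightarrow>
          typing \<Delta> \<Gamma> (App M N) (subst (inst [N]) B)"
| t_conv: "typing \<Delta> \<Gamma> M A \<Longrightarrow> equiv \<Delta> A B \<Longrightarrow> typing \<Delta> \<Gamma> B (U i) \<Longrightarrow>
           typing \<Delta> \<Gamma> M B"
| t_lab: "wf \<Delta> \<Gamma> \<Longrightarrow> (l, As, A, L, B) \<in> set \<Delta> \<Longrightarrow> length Ms = length As \<Longrightarrow>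
          (\<forall>k < length Ms. typing \<Delta> \<Gamma> (Ms ! k) (subst (inst (take k Ms)) (As ! k))) \<Longrightarrow>
          typing \<Delta> \<Gamma> (Lab l Ms) (Pi (subst (inst Ms) A) (subst (up (inst Ms)) B))"
| wf_empty: "wf [] []"
| wf_lab: "l \<notin> fst ` set \<Delta> \<Longrightarrow> typing \<Delta> (rev As) (Pi A B) (U i) \<Longrightarrow>
           typing \<Delta> (A # rev As) L B \<Longrightarrow> wf (\<Delta> @ [(l, As, A, L, B)]) []"
| wf_var: "wf \<Delta> \<Gamma> \<Longrightarrow> typing \<Delta> \<Gamma> A (U i) \<Longrightarrow> wf \<Delta> (A # \<Gamma>)"

definition is_value :: "trm \<Rightarrow> bool" where
  "is_value v \<longleftrightarrow> (\<exists>i. v = U i) \<or> (\<exists>A B. v = Pi A B) \<or> (\<exists>l Ms. v = Lab l Ms)"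

definition irreducible :: "lctx \<Rightarrow> trm \<Rightarrow> bool" where
  "irreducible \<Delta> M \<longleftrightarrow> \<not> (\<exists>N. red \<Delta> M N)"

end

theory Submission
  imports Defs "HOL-Library.Confluence"
begin

text \<open>Normalisation by reducibility candidates, stratified by universe level. At level \<open>i\<close> a
  type denotes a set of terms that is closed under reduction and expansion, contains the
  normalising neutral terms, and consists of terms normalising to a value or a neutral term;
  \<open>U j\<close> denotes the types interpretable at level \<open>j < i\<close> and a \<open>\<Pi>\<close>-type the functions mapping
  its domain into its codomain family. Confluence (by parallel reduction) makes the
  interpretation invariant under conversion, and the body of each label is validated when the
  label enters the context, so that label applications are sound. By the fundamental lemma
  every closed well-typed term normalises, and a closed normal form cannot be neutral.\<close>

section \<open>Renaming and substitution\<close>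

definition scons :: "trm \<Rightarrow> (nat \<Rightarrow> trm) \<Rightarrow> nat \<Rightarrow> trm" where
  "scons a \<sigma> = (\<lambda>j. case j of 0 \<Rightarrow> a | Suc k \<Rightarrow> \<sigma> k)"

definition up_ren :: "(nat \<Rightarrow> nat) \<Rightarrow> nat \<Rightarrow> nat" where
  "up_ren f = (\<lambda>j. case j of 0 \<Rightarrow> 0 | Suc k \<Rightarrow> Suc (f k))"

lemma scons_0 [simp]: "scons a \<sigma> 0 = a"
  and scons_Suc [simp]: "scons a \<sigma> (Suc k) = \<sigma> k"
  by (simp_all add: scons_def)

lemma up_0 [simp]: "up \<sigma> 0 = Var 0"
  and up_Suc [simp]: "up \<sigma> (Suc k) = lift (\<sigma> k)"
  by (simp_all add: up_def)

lemma up_ren_0 [simp]: "up_ren f 0 = 0"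
  and up_ren_Suc [simp]: "up_ren f (Suc k) = Suc (f k)"
  by (simp_all add: up_ren_def)

lemma ren_Pi [simp]: "ren f (Pi A B) = Pi (ren f A) (ren (up_ren f) B)"
  by (simp add: up_ren_def)

declare ren.simps(3) [simp del]

lemma ren_ren: "ren f (ren g M) = ren (f \<circ> g) M"
proof (induction M arbitrary: f g)
  case (Pi A B)
  have "up_ren f \<circ> up_ren g = up_ren (f \<circ> g)"
    by (auto simp: fun_eq_iff up_ren_def split: nat.splits)
  then show ?case by (simp only: ren_Pi Pi.IH)
qed auto

lemma ren_id: "ren (\<lambda>x. x) M = M"
proof (induction M)
  case (Pi A B)
  have "up_ren (\<lambda>x. x) = (\<lambda>x. x)"
    by (auto simp: fun_eq_iff up_ren_def split: nat.splits)
  with Pi.IH show ?case by simp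
qed (auto simp: map_idI)

lemma ren_eq_subst: "ren f = subst (Var \<circ> f)"
proof
  fix M show "ren f M = subst (Var \<circ> f) M"
  proof (induction M arbitrary: f)
    case (Pi A B)
    have "up (Var \<circ> f) = Var \<circ> up_ren f"
      by (auto simp: fun_eq_iff up_def lift_def split: nat.splits)
    then show ?case by (simp only: ren_Pi subst.simps(3) Pi.IH)
  qed auto
qed

lemma subst_ren: "subst \<sigma> (ren f M) = subst (\<sigma> \<circ> f) M"
proof (induction M arbitrary: f \<sigma>)
  case (Pi A B)
  have "up \<sigma> \<circ> up_ren f = up (\<sigma> \<circ> f)"
    by (auto simp: fun_eq_iff up_def split: nat.splits)
  then show ?case by (simp only: ren_Pi subst.simps(3) Pi.IH)
qed auto

lemma ren_subst: "ren f (subst \<sigma> M) = subst (ren f \<circ> \<sigma>) M"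
proof (induction M arbitrary: f \<sigma>)
  case (Pi A B)
  have "ren (up_ren f) \<circ> up \<sigma> = up (ren f \<circ> \<sigma>)"
  proof
    fix j show "(ren (up_ren f) \<circ> up \<sigma>) j = up (ren f \<circ> \<sigma>) j"
      by (cases j) (simp_all add: lift_def ren_ren comp_def)
  qed
  then show ?case by (simp only: ren_Pi subst.simps(3) Pi.IH)
qed auto

lemma subst_up_comp: "subst (up \<sigma>) \<circ> up \<tau> = up (subst \<sigma> \<circ> \<tau>)"
proof
  fix j show "(subst (up \<sigma>) \<circ> up \<tau>) j = up (subst \<sigma> \<circ> \<tau>) j"
    by (cases j) (simp_all add: lift_def subst_ren ren_subst comp_def)
qed

lemma subst_subst: "subst \<sigma> (subst \<tau> M) = subst (subst \<sigma> \<circ> \<tau>) M"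
proof (induction M arbitrary: \<sigma> \<tau>)
  case (Pi A B)
  show ?case by (simp only: subst.simps(3) Pi.IH subst_up_comp)
qed auto

lemma subst_Var: "subst Var M = M"
proof (induction M)
  case (Pi A B)
  have "up Var = Var"
    by (auto simp: fun_eq_iff up_def lift_def split: nat.splits)
  then show ?case by (simp only: subst.simps(3) Pi.IH)
qed (auto simp: map_idI)

lemma inst_nth: "j < length Ms \<Longrightarrow> inst Ms j = rev Ms ! j"
  by (simp add: inst_def)

lemma inst_Nil: "inst [] = Var"
  by (simp add: inst_def fun_eq_iff)

lemma inst_snoc: "inst (Ms @ [N]) = scons N (inst Ms)"
proof
  fix j show "inst (Ms @ [N]) j = scons N (inst Ms) j"
    by (cases j) (simp_all add: inst_def nth_append)
qed

lemma inst_single: "inst [N] = scons N Var"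
  using inst_snoc[of "[]" N] by (simp add: inst_Nil)

lemma subst_inst_single_up: "subst (inst [a]) (subst (up \<sigma>) B) = subst (scons a \<sigma>) B"
proof -
  have "subst (inst [a]) \<circ> up \<sigma> = scons a \<sigma>"
  proof
    fix j show "(subst (inst [a]) \<circ> up \<sigma>) j = scons a \<sigma> j"
      by (cases j) (simp_all add: inst_single lift_def subst_ren comp_def subst_Var)
  qed
  then show ?thesis by (simp only: subst_subst)
qed

lemma subst_subst_inst_single: "subst \<sigma> (subst (inst [N]) B) = subst (scons (subst \<sigma> N) \<sigma>) B"
proof -
  have "subst \<sigma> \<circ> inst [N] = scons (subst \<sigma> N) \<sigma>"
  proof
    fix j show "(subst \<sigma> \<circ> inst [N]) j = scons (subst \<sigma> N) \<sigma> j"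
      by (cases j) (simp_all add: inst_single)
  qed
  then show ?thesis by (simp only: subst_subst)
qed

text \<open>On \<open>nat\<close>, \<open>j - 1\<close> sends both \<open>0\<close> and \<open>1\<close> to \<open>0\<close>.\<close>
lemma subst_scons_Var0: "subst (scons (Var 0) \<sigma>) B = ren (\<lambda>j. j - 1) (subst (up \<sigma>) B)"
proof -
  have "ren (\<lambda>j. j - 1) \<circ> up \<sigma> = scons (Var 0) \<sigma>"
  proof
    fix j show "(ren (\<lambda>j. j - 1) \<circ> up \<sigma>) j = scons (Var 0) \<sigma> j"
      by (cases j) (simp_all add: lift_def ren_ren comp_def ren_id)
  qed
  then show ?thesis by (simp add: ren_subst)
qed

primrec scoped :: "nat \<Rightarrow> trm \<Rightarrow> bool" where
  "scoped k (Var i) \<longleftrightarrow> i < k"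
| "scoped k (U i) \<longleftrightarrow> True"
| "scoped k (Pi A B) \<longleftrightarrow> scoped k A \<and> scoped (Suc k) B"
| "scoped k (App M N) \<longleftrightarrow> scoped k M \<and> scoped k N"
| "scoped k (Lab l Ms) \<longleftrightarrow> list_all (scoped k) Ms"

lemma scoped_Lab [simp]: "scoped k (Lab l Ms) \<longleftrightarrow> (\<forall>M\<in>set Ms. scoped k M)"
  by (simp add: list_all_iff)

declare scoped.simps(5) [simp del]

lemma subst_scoped_cong:
  "scoped k M \<Longrightarrow> (\<And>j. j < k \<Longrightarrow> \<sigma> j = \<tau> j) \<Longrightarrow> subst \<sigma> M = subst \<tau> M"
proof (induction M arbitrary: k \<sigma> \<tau>)
  case (Pi A B)
  have "\<And>j. j < Suc k \<Longrightarrow> up \<sigma> j = up \<tau> j"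
    using Pi.prems(2) by (auto simp: up_def split: nat.splits)
  with Pi.prems Pi.IH(1)[of k \<sigma> \<tau>] Pi.IH(2)[of "Suc k" "up \<sigma>" "up \<tau>"] show ?case
    by simp
next
  case (App M N)
  then show ?case using App.IH[of k \<sigma> \<tau>] by simp
next
  case (Lab l Ms)
  then show ?case using Lab.IH[of _ k \<sigma> \<tau>] by simp
qed auto

lemma scoped_ren: "scoped k M \<Longrightarrow> (\<And>j. j < k \<Longrightarrow> f j < m) \<Longrightarrow> scoped m (ren f M)"
proof (induction M arbitrary: k m f)
  case (Pi A B)
  have "\<And>j. j < Suc k \<Longrightarrow> up_ren f j < Suc m"
    using Pi.prems(2) by (auto simp: up_ren_def split: nat.splits)
  with Pi.prems Pi.IH(1)[of k f m] Pi.IH(2)[of "Suc k" "up_ren f" "Suc m"] show ?case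
    by simp
qed auto

lemma scoped_subst:
  "scoped k M \<Longrightarrow> (\<And>j. j < k \<Longrightarrow> scoped m (\<sigma> j)) \<Longrightarrow> scoped m (subst \<sigma> M)"
proof (induction M arbitrary: k m \<sigma>)
  case (Pi A B)
  have "\<And>j. j < Suc k \<Longrightarrow> scoped (Suc m) (up \<sigma> j)"
    using Pi.prems(2) by (auto simp: up_def lift_def split: nat.splits intro!: scoped_ren)
  with Pi.prems Pi.IH(1)[of k m \<sigma>] Pi.IH(2)[of "Suc k" "Suc m" "up \<sigma>"] show ?case
    by simp
qed auto

lemma subst_subst_inst:
  assumes "scoped (length Ms) X"
  shows "subst \<sigma> (subst (inst Ms) X) = subst (inst (map (subst \<sigma>) Ms)) X"
proof -
  have "subst \<sigma> (subst (inst Ms) X) = subst (subst \<sigma> \<circ> inst Ms) X"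
    by (simp add: subst_subst)
  also have "\<dots> = subst (inst (map (subst \<sigma>) Ms)) X"
    by (rule subst_scoped_cong[OF assms]) (simp add: inst_nth rev_map)
  finally show ?thesis .
qed

lemma inst_add_take:
  "k \<le> length Ms \<Longrightarrow> x < k \<Longrightarrow> inst Ms (x + (length Ms - k)) = inst (take k Ms) x"
  by (simp add: inst_nth rev_nth min_def)

definition scoped_ctx :: "tctx \<Rightarrow> bool" where
  "scoped_ctx \<Gamma> \<longleftrightarrow> (\<forall>j<length \<Gamma>. scoped (length \<Gamma> - Suc j) (\<Gamma> ! j))"

lemma scoped_ctx_Nil: "scoped_ctx []"
  by (simp add: scoped_ctx_def)

lemma scoped_ctx_Cons: "scoped_ctx \<Gamma> \<Longrightarrow> scoped (length \<Gamma>) A \<Longrightarrow> scoped_ctx (A # \<Gamma>)"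
  by (auto simp: scoped_ctx_def nth_Cons split: nat.splits)

lemma scoped_ctx_rev_nth: "scoped_ctx (rev As) \<Longrightarrow> k < length As \<Longrightarrow> scoped k (As ! k)"
  by (auto simp: scoped_ctx_def rev_nth dest!: spec[of _ "length As - Suc k"])

text \<open>Distinct labels make the rewrite rules of a label context non-overlapping; scoped
  bodies make them stable under substitution.\<close>
definition lctx_ok :: "lctx \<Rightarrow> bool" where
  "lctx_ok \<Delta> \<longleftrightarrow> distinct (map fst \<Delta>)
     \<and> (\<forall>(l, As, A, L, B) \<in> set \<Delta>. scoped (Suc (length As)) L)"

definition lctx_scoped :: "lctx \<Rightarrow> bool" where
  "lctx_scoped \<Delta> \<longleftrightarrow> lctx_ok \<Delta> \<and> (\<forall>(l, As, A, L, B) \<in> set \<Delta>.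
     scoped_ctx (rev As) \<and> scoped (length As) A \<and> scoped (Suc (length As)) B)"

lemma lctx_scoped_ok: "lctx_scoped \<Delta> \<Longrightarrow> lctx_ok \<Delta>"
  by (simp add: lctx_scoped_def)

lemma typing_scoped:
  shows "typing \<Delta> \<Gamma> M T \<Longrightarrow> lctx_scoped \<Delta> \<and> scoped_ctx \<Gamma> \<and> scoped (length \<Gamma>) M"
    and "wf \<Delta> \<Gamma> \<Longrightarrow> lctx_scoped \<Delta> \<and> scoped_ctx \<Gamma>"
proof (induction rule: typing_wf.inducts)
  case (t_lab \<Delta> \<Gamma> l As A L B Ms)
  then show ?case by (auto simp: in_set_conv_nth)
next
  case wf_empty
  then show ?case by (simp add: lctx_scoped_def lctx_ok_def scoped_ctx_Nil)
next
  case (wf_lab l \<Delta> As A B i L)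
  then show ?case by (auto simp: lctx_scoped_def lctx_ok_def scoped_ctx_Nil)
next
  case (wf_var \<Delta> \<Gamma> A i)
  then show ?case by (simp add: scoped_ctx_Cons)
qed auto

lemma red_lctx_mono: "red \<Delta>' M N \<Longrightarrow> set \<Delta>' \<subseteq> set \<Delta> \<Longrightarrow> red \<Delta> M N"
  by (induction rule: red.induct) (auto intro: red.intros)

lemma reds_refl [simp]: "reds \<Delta> M M"
  by (simp add: reds_def)

lemma reds_trans: "reds \<Delta> M N \<Longrightarrow> reds \<Delta> N P \<Longrightarrow> reds \<Delta> M P"
  by (simp add: reds_def)

lemma red_reds: "red \<Delta> M N \<Longrightarrow> reds \<Delta> M N"
  by (simp add: reds_def)

lemma reds_step: "reds \<Delta> M N \<Longrightarrow> red \<Delta> N P \<Longrightarrow> reds \<Delta> M P"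
  by (simp add: reds_def)

lemma reds_induct [consumes 1, case_names refl step]:
  "reds \<Delta> M N \<Longrightarrow> P M \<Longrightarrow> (\<And>y z. reds \<Delta> M y \<Longrightarrow> red \<Delta> y z \<Longrightarrow> P y \<Longrightarrow> P z) \<Longrightarrow> P N"
  unfolding reds_def by (induction rule: rtranclp_induct) auto

lemma reds_lctx_mono: "reds \<Delta>' M N \<Longrightarrow> set \<Delta>' \<subseteq> set \<Delta> \<Longrightarrow> reds \<Delta> M N"
  by (induction rule: reds_induct) (auto intro: reds_step red_lctx_mono)

lemma reds_Pi:
  assumes "reds \<Delta> A A'" "reds \<Delta> B B'"
  shows "reds \<Delta> (Pi A B) (Pi A' B')"
proof -
  from assms(1) have "reds \<Delta> (Pi A B) (Pi A' B)"
    by (induction rule: reds_induct) (auto intro: reds_step red.piL)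
  moreover from assms(2) have "reds \<Delta> (Pi A' B) (Pi A' B')"
    by (induction rule: reds_induct) (auto intro: reds_step red.piR)
  ultimately show ?thesis by (rule reds_trans)
qed

lemma reds_App:
  assumes "reds \<Delta> M M'" "reds \<Delta> N N'"
  shows "reds \<Delta> (App M N) (App M' N')"
proof -
  from assms(1) have "reds \<Delta> (App M N) (App M' N)"
    by (induction rule: reds_induct) (auto intro: reds_step red.appL)
  moreover from assms(2) have "reds \<Delta> (App M' N) (App M' N')"
    by (induction rule: reds_induct) (auto intro: reds_step red.appR)
  ultimately show ?thesis by (rule reds_trans)
qed

lemma reds_Lab_update:
  "reds \<Delta> (Ms ! k) M' \<Longrightarrow> k < length Ms \<Longrightarrow> reds \<Delta> (Lab l Ms) (Lab l (Ms[k := M']))"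
proof (induction rule: reds_induct)
  case (step y z)
  then have "red \<Delta> (Lab l (Ms[k := y])) (Lab l (Ms[k := y, k := z]))"
    by (intro red.lab) auto
  with step show ?case by (auto intro: reds_step)
qed simp

lemma reds_Lab: "list_all2 (reds \<Delta>) Ms Ms' \<Longrightarrow> reds \<Delta> (Lab l Ms) (Lab l Ms')"
proof -
  have "reds \<Delta> (Lab l (xs @ Ms)) (Lab l (xs @ Ms'))" if "list_all2 (reds \<Delta>) Ms Ms'" for xs
    using that
  proof (induction Ms Ms' arbitrary: xs rule: list_all2_induct)
    case (Cons M Ms M' Ms')
    have "reds \<Delta> (Lab l (xs @ M # Ms)) (Lab l ((xs @ M # Ms)[length xs := M']))"
      using Cons.hyps(1) by (intro reds_Lab_update) auto
    moreover have "reds \<Delta> (Lab l ((xs @ [M']) @ Ms)) (Lab l ((xs @ [M']) @ Ms'))"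
      by (rule Cons.IH)
    ultimately show ?case by (auto intro: reds_trans)
  qed simp
  from this[of "[]"] show "list_all2 (reds \<Delta>) Ms Ms' \<Longrightarrow> ?thesis" by simp
qed

lemma subst_beta:
  "scoped (Suc (length Ms)) L \<Longrightarrow>
   subst \<sigma> (subst (inst (Ms @ [N])) L) = subst (inst (map (subst \<sigma>) Ms @ [subst \<sigma> N])) L"
  using subst_subst_inst[of "Ms @ [N]" L \<sigma>] by simp

lemma red_subst: "red \<Delta> M N \<Longrightarrow> lctx_ok \<Delta> \<Longrightarrow> red \<Delta> (subst \<sigma> M) (subst \<sigma> N)"
proof (induction arbitrary: \<sigma> rule: red.induct)
  case (beta l As A L B \<Delta> Ms N)
  then have "scoped (Suc (length Ms)) L" by (auto simp: lctx_ok_def)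
  with beta show ?case by (auto simp: subst_beta intro!: red.beta)
qed (auto simp: map_update intro: red.intros)

lemma reds_subst: "reds \<Delta> M N \<Longrightarrow> lctx_ok \<Delta> \<Longrightarrow> reds \<Delta> (subst \<sigma> M) (subst \<sigma> N)"
  by (induction rule: reds_induct) (auto intro: reds_step red_subst)

lemma red_ren_reflect:
  "red \<Delta> (ren f M) N' \<Longrightarrow> lctx_ok \<Delta> \<Longrightarrow> \<exists>N. red \<Delta> M N \<and> N' = ren f N"
proof (induction "ren f M" N' arbitrary: M f rule: red.induct)
  case (beta l As A L B \<Delta> Ms' N')
  then obtain M1 N where M: "M = App M1 N" "ren f M1 = Lab l Ms'" "N' = ren f N"
    by (cases M) auto
  then obtain Ms where Ms: "M1 = Lab l Ms" "Ms' = map (ren f) Ms"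
    by (cases M1) auto
  have "scoped (Suc (length Ms)) L" using beta Ms by (auto simp: lctx_ok_def)
  then have "ren f (subst (inst (Ms @ [N])) L) = subst (inst (Ms' @ [N'])) L"
    by (simp add: ren_eq_subst subst_beta M Ms)
  moreover have "red \<Delta> M (subst (inst (Ms @ [N])) L)"
    using beta M Ms by (auto intro: red.beta)
  ultimately show ?case by metis
next
  case (piL \<Delta> A A' B)
  then show ?case by (cases M) (fastforce intro: red.piL)+
next
  case (piR \<Delta> B B' A)
  then show ?case by (cases M) (fastforce intro: red.piR)+
next
  case (appL \<Delta> A A' B)
  then show ?case by (cases M) (fastforce intro: red.appL)+
next
  case (appR \<Delta> B B' A)
  then show ?case by (cases M) (fastforce intro: red.appR)+
next
  case (lab k Ms' \<Delta> M' l)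
  then obtain Ms where M: "M = Lab l Ms" "Ms' = map (ren f) Ms" by (cases M) auto
  with lab obtain N where "red \<Delta> (Ms ! k) N" "M' = ren f N" by auto
  with M lab show ?case
    by (auto intro!: exI[of _ "Lab l (Ms[k := N])"] red.lab simp: map_update)
qed

lemma reds_ren_reflect:
  "reds \<Delta> (ren f M) N' \<Longrightarrow> lctx_ok \<Delta> \<Longrightarrow> \<exists>N. reds \<Delta> M N \<and> N' = ren f N"
proof (induction rule: reds_induct)
  case (step y z)
  then obtain N where "reds \<Delta> M N" "y = ren f N" by auto
  with step red_ren_reflect[of \<Delta> f N z] show ?case by (auto intro: reds_step)
qed (auto intro: exI[of _ M])

lemma red_scoped: "red \<Delta> M N \<Longrightarrow> lctx_ok \<Delta> \<Longrightarrow> scoped k M \<Longrightarrow> scoped k N"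
proof (induction arbitrary: k rule: red.induct)
  case (beta l As A L B \<Delta> Ms N)
  have "scoped (Suc (length Ms)) L" using beta by (auto simp: lctx_ok_def)
  moreover have "scoped k (inst (Ms @ [N]) j)" if "j < Suc (length Ms)" for j
  proof -
    have "inst (Ms @ [N]) j \<in> set (Ms @ [N])"
      using that nth_mem[of j "rev (Ms @ [N])"] by (simp add: inst_nth)
    with beta.prems(2) show ?thesis by auto
  qed
  ultimately show ?case by (rule scoped_subst)
next
  case (lab j Ms \<Delta> M' l)
  then have "scoped k M'" by (simp add: nth_mem)
  with lab.prems(2) show ?case by (auto dest!: set_update_subset_insert[THEN subsetD])
qed auto

lemma reds_scoped: "reds \<Delta> M N \<Longrightarrow> lctx_ok \<Delta> \<Longrightarrow> scoped k M \<Longrightarrow> scoped k N"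
  by (induction rule: reds_induct) (auto intro: red_scoped)

section \<open>Confluence\<close>

inductive par :: "lctx \<Rightarrow> trm \<Rightarrow> trm \<Rightarrow> bool" for \<Delta> where
  par_Var: "par \<Delta> (Var i) (Var i)"
| par_U: "par \<Delta> (U i) (U i)"
| par_Pi: "par \<Delta> A A' \<Longrightarrow> par \<Delta> B B' \<Longrightarrow> par \<Delta> (Pi A B) (Pi A' B')"
| par_App: "par \<Delta> M M' \<Longrightarrow> par \<Delta> N N' \<Longrightarrow> par \<Delta> (App M N) (App M' N')"
| par_Lab: "list_all2 (par \<Delta>) Ms Ms' \<Longrightarrow> par \<Delta> (Lab l Ms) (Lab l Ms')"
| par_beta: "(l, As, A, L, B) \<in> set \<Delta> \<Longrightarrow> length Ms = length As \<Longrightarrow> list_all2 (par \<Delta>) Ms Ms' \<Longrightarrow>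
    par \<Delta> N N' \<Longrightarrow> par \<Delta> (App (Lab l Ms) N) (subst (inst (Ms' @ [N'])) L)"

lemma par_refl: "par \<Delta> M M"
proof (induction M)
  case (Lab l Ms)
  then have "list_all2 (par \<Delta>) Ms Ms" by (simp add: list.rel_refl_strong)
  then show ?case by (rule par_Lab)
qed (auto intro: par.intros)

lemma par_Lab_inv: "par \<Delta> (Lab l Ms) X \<Longrightarrow> \<exists>Ms'. X = Lab l Ms' \<and> list_all2 (par \<Delta>) Ms Ms'"
  by (cases rule: par.cases) auto

lemma red_par: "red \<Delta> M N \<Longrightarrow> par \<Delta> M N"
proof (induction rule: red.induct)
  case (beta l As A L B \<Delta> Ms N)
  then show ?case by (intro par_beta) (auto simp: par_refl list.rel_refl)
next
  case (lab k Ms \<Delta> M' l)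
  then have "list_all2 (par \<Delta>) Ms (Ms[k := M'])"
    by (auto simp: list_all2_conv_all_nth nth_list_update par_refl)
  then show ?case by (rule par_Lab)
qed (auto intro: par.intros par_refl)

lemma par_reds: "par \<Delta> M N \<Longrightarrow> reds \<Delta> M N"
proof (induction rule: par.induct)
  case (par_Lab Ms Ms' l)
  then show ?case by (simp add: reds_Lab list_all2_conv_all_nth)
next
  case (par_beta l As A L B Ms Ms' N N')
  then have "reds \<Delta> (App (Lab l Ms) N) (App (Lab l Ms') N')"
    by (simp add: reds_App reds_Lab list_all2_conv_all_nth)
  moreover have "red \<Delta> (App (Lab l Ms') N') (subst (inst (Ms' @ [N'])) L)"
    using par_beta by (intro red.beta[of l As A L B]) (auto dest: list_all2_lengthD)
  ultimately show ?case by (rule reds_step)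
qed (simp_all add: reds_Pi reds_App)

lemma reds_eq_par: "reds \<Delta> = (par \<Delta>)\<^sup>*\<^sup>*"
proof (intro ext iffI)
  fix M N assume "reds \<Delta> M N"
  then show "(par \<Delta>)\<^sup>*\<^sup>* M N"
    by (induction rule: reds_induct) (auto intro: red_par rtranclp.rtrancl_into_rtrancl)
next
  fix M N assume "(par \<Delta>)\<^sup>*\<^sup>* M N"
  then show "reds \<Delta> M N"
    by (induction rule: rtranclp_induct) (auto intro: par_reds reds_trans)
qed

lemma par_ren: "par \<Delta> M M' \<Longrightarrow> lctx_ok \<Delta> \<Longrightarrow> par \<Delta> (ren f M) (ren f M')"
proof (induction arbitrary: f rule: par.induct)
  case (par_Lab Ms Ms' l)
  then have "list_all2 (par \<Delta>) (map (ren f) Ms) (map (ren f) Ms')"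
    by (auto simp: list_all2_conv_all_nth)
  then show ?case by (simp add: par.par_Lab)
next
  case (par_beta l As A L B Ms Ms' N N')
  then have "scoped (Suc (length Ms')) L" by (auto simp: lctx_ok_def dest!: list_all2_lengthD)
  then have "ren f (subst (inst (Ms' @ [N'])) L) = subst (inst (map (ren f) Ms' @ [ren f N'])) L"
    by (simp add: ren_eq_subst subst_beta)
  moreover have "list_all2 (par \<Delta>) (map (ren f) Ms) (map (ren f) Ms')"
    using par_beta by (auto simp: list_all2_conv_all_nth)
  ultimately show ?case
    using par_beta by (auto intro: par.par_beta)
qed (auto intro: par.intros)

lemma par_subst:
  "par \<Delta> M M' \<Longrightarrow> lctx_ok \<Delta> \<Longrightarrow> (\<And>j. par \<Delta> (\<sigma> j) (\<sigma>' j)) \<Longrightarrow>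
   par \<Delta> (subst \<sigma> M) (subst \<sigma>' M')"
proof (induction arbitrary: \<sigma> \<sigma>' rule: par.induct)
  case (par_Pi A A' B B')
  have "par \<Delta> (up \<sigma> j) (up \<sigma>' j)" for j
    using par_Pi.prems by (cases j) (auto simp: lift_def intro: par_Var par_ren)
  with par_Pi show ?case by (auto intro: par.par_Pi)
next
  case (par_Lab Ms Ms' l)
  then have "list_all2 (par \<Delta>) (map (subst \<sigma>) Ms) (map (subst \<sigma>') Ms')"
    by (auto simp: list_all2_conv_all_nth)
  then show ?case by (simp add: par.par_Lab)
next
  case (par_beta l As A L B Ms Ms' N N')
  then have "scoped (Suc (length Ms')) L" by (auto simp: lctx_ok_def dest!: list_all2_lengthD)
  then have "subst \<sigma>' (subst (inst (Ms' @ [N'])) L)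
      = subst (inst (map (subst \<sigma>') Ms' @ [subst \<sigma>' N'])) L"
    by (rule subst_beta)
  moreover have "list_all2 (par \<Delta>) (map (subst \<sigma>) Ms) (map (subst \<sigma>') Ms')"
    using par_beta by (auto simp: list_all2_conv_all_nth)
  ultimately show ?case
    using par_beta by (auto intro: par.par_beta)
qed (auto intro: par.intros)

text \<open>Takahashi's complete development: every parallel reduct of \<open>M\<close> reduces in parallel to
  \<open>dev \<Delta> M\<close>, which gives the diamond property.\<close>
fun dev :: "lctx \<Rightarrow> trm \<Rightarrow> trm" where
  "dev \<Delta> (Var i) = Var i"
| "dev \<Delta> (U i) = U i"
| "dev \<Delta> (Pi A B) = Pi (dev \<Delta> A) (dev \<Delta> B)"
| "dev \<Delta> (App (Lab l Ms) N) = (case map_of \<Delta> l of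
     Some (As, A, L, B) \<Rightarrow>
       if length Ms = length As then subst (inst (map (dev \<Delta>) Ms @ [dev \<Delta> N])) L
       else App (Lab l (map (dev \<Delta>) Ms)) (dev \<Delta> N)
   | None \<Rightarrow> App (Lab l (map (dev \<Delta>) Ms)) (dev \<Delta> N))"
| "dev \<Delta> (App M N) = App (dev \<Delta> M) (dev \<Delta> N)"
| "dev \<Delta> (Lab l Ms) = Lab l (map (dev \<Delta>) Ms)"

lemma dev_App_not_Lab: "(\<And>l Ms. M \<noteq> Lab l Ms) \<Longrightarrow> dev \<Delta> (App M N) = App (dev \<Delta> M) (dev \<Delta> N)"
  by (cases M) auto

lemma par_inst: "list_all2 (par \<Delta>) Ms Ms' \<Longrightarrow> par \<Delta> (inst Ms j) (inst Ms' j)"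
  by (auto simp: inst_def list_all2_lengthD list_all2_nthD2 list_all2_rev par_refl)

lemma par_dev_App_Lab:
  assumes "par \<Delta> (Lab l Ms') (Lab l (map (dev \<Delta>) Ms))" "par \<Delta> N' (dev \<Delta> N)"
  shows "par \<Delta> (App (Lab l Ms') N') (dev \<Delta> (App (Lab l Ms) N))"
proof -
  have Ms: "list_all2 (par \<Delta>) Ms' (map (dev \<Delta>) Ms)"
    using par_Lab_inv[OF assms(1)] by simp
  have default: "par \<Delta> (App (Lab l Ms') N') (App (Lab l (map (dev \<Delta>) Ms)) (dev \<Delta> N))"
    using assms by (rule par_App)
  show ?thesis
  proof (cases "map_of \<Delta> l")
    case (Some e)
    obtain As A L B where e: "e = (As, A, L, B)" by (cases e)
    have "(l, As, A, L, B) \<in> set \<Delta>" using Some e by (simp add: map_of_SomeD)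
    moreover have "length Ms' = length Ms" using Ms by (simp add: list_all2_lengthD)
    ultimately show ?thesis
      using Some e default Ms assms(2) by (auto intro: par_beta)
  qed (use default in simp)
qed

lemma par_dev: "par \<Delta> M N \<Longrightarrow> lctx_ok \<Delta> \<Longrightarrow> par \<Delta> N (dev \<Delta> M)"
proof (induction rule: par.induct)
  case (par_Lab Ms Ms' l)
  then have "list_all2 (par \<Delta>) Ms' (map (dev \<Delta>) Ms)"
    by (auto simp: list_all2_conv_all_nth)
  then show ?case by (simp add: par.par_Lab)
next
  case (par_App M M' N N')
  show ?case
  proof (cases "\<exists>l Ms. M = Lab l Ms")
    case True
    then obtain l Ms where M: "M = Lab l Ms" by blast
    with par_App obtain Ms' where "M' = Lab l Ms'" using par_Lab_inv by blast
    with par_App M show ?thesis by (simp add: par_dev_App_Lab del: dev.simps(4))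
  qed (use par_App in \<open>simp add: dev_App_not_Lab par.par_App\<close>)
next
  case (par_beta l As A L B Ms Ms' N N')
  have "map_of \<Delta> l = Some (As, A, L, B)"
    using par_beta by (intro map_of_is_SomeI) (auto simp: lctx_ok_def)
  moreover have "list_all2 (par \<Delta>) (Ms' @ [N']) (map (dev \<Delta>) Ms @ [dev \<Delta> N])"
    using par_beta by (auto simp: list_all2_conv_all_nth nth_append)
  then have "par \<Delta> (subst (inst (Ms' @ [N'])) L) (subst (inst (map (dev \<Delta>) Ms @ [dev \<Delta> N])) L)"
    using par_beta.prems by (intro par_subst par_refl par_inst)
  ultimately show ?case using par_beta by simp
qed (auto intro: par.intros)

lemma strong_confluentp_par:
  assumes "lctx_ok \<Delta>"
  shows "strong_confluentp (par \<Delta>)"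
proof (rule strong_confluentpI)
  fix M N1 N2 assume "par \<Delta> M N1" "par \<Delta> M N2"
  with assms show "\<exists>P. (par \<Delta>)\<^sup>*\<^sup>* N1 P \<and> (par \<Delta>)\<^sup>=\<^sup>= N2 P"
    by (intro exI[of _ "dev \<Delta> M"]) (auto intro: par_dev)
qed

lemma reds_confluent:
  "reds \<Delta> M N1 \<Longrightarrow> reds \<Delta> M N2 \<Longrightarrow> lctx_ok \<Delta> \<Longrightarrow> \<exists>P. reds \<Delta> N1 P \<and> reds \<Delta> N2 P"
  unfolding reds_eq_par
  by (rule confluentpD[OF strong_confluentp_imp_confluentp[OF strong_confluentp_par]])

fun neutral :: "trm \<Rightarrow> bool" where
  "neutral (Var i) \<longleftrightarrow> True"
| "neutral (App M N) \<longleftrightarrow> neutral M"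
| "neutral _ \<longleftrightarrow> False"

definition WN :: "lctx \<Rightarrow> trm \<Rightarrow> bool" where
  "WN \<Delta> M \<longleftrightarrow> (\<exists>v. reds \<Delta> M v \<and> irreducible \<Delta> v)"

definition WN_neutral :: "lctx \<Rightarrow> trm \<Rightarrow> bool" where
  "WN_neutral \<Delta> M \<longleftrightarrow> (\<exists>n. reds \<Delta> M n \<and> irreducible \<Delta> n \<and> neutral n)"

definition WN_val_neutral :: "lctx \<Rightarrow> trm \<Rightarrow> bool" where
  "WN_val_neutral \<Delta> M \<longleftrightarrow> (\<exists>v. reds \<Delta> M v \<and> irreducible \<Delta> v \<and> (is_value v \<or> neutral v))"

definition joinable :: "lctx \<Rightarrow> trm \<Rightarrow> trm \<Rightarrow> bool" where
  "joinable \<Delta> M N \<longleftrightarrow> (\<exists>P. reds \<Delta> M P \<and> reds \<Delta> N P)"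

lemma reds_irreducible: "reds \<Delta> M N \<Longrightarrow> irreducible \<Delta> M \<Longrightarrow> N = M"
  by (induction rule: reds_induct) (auto simp: irreducible_def)

lemma irreducible_U: "irreducible \<Delta> (U i)"
  by (auto simp: irreducible_def elim: red.cases)

lemma irreducible_Var: "irreducible \<Delta> (Var i)"
  by (auto simp: irreducible_def elim: red.cases)

lemma irreducible_Pi: "irreducible \<Delta> A \<Longrightarrow> irreducible \<Delta> B \<Longrightarrow> irreducible \<Delta> (Pi A B)"
  by (auto simp: irreducible_def elim: red.cases)

lemma irreducible_Lab:
  assumes "\<And>M. M \<in> set Ms \<Longrightarrow> irreducible \<Delta> M"
  shows "irreducible \<Delta> (Lab l Ms)"
proof (unfold irreducible_def, rule notI, elim exE)
  fix N assume "red \<Delta> (Lab l Ms) N"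
  then show False
    by (cases rule: red.cases) (use assms nth_mem in \<open>auto simp: irreducible_def\<close>)
qed

lemma irreducible_App_neutral:
  assumes "neutral M" "irreducible \<Delta> M" "irreducible \<Delta> N"
  shows "irreducible \<Delta> (App M N)"
proof (unfold irreducible_def, rule notI, elim exE)
  fix P assume "red \<Delta> (App M N) P"
  then show False
    by (cases rule: red.cases) (use assms in \<open>auto simp: irreducible_def\<close>)
qed

lemma reds_U: "reds \<Delta> (U i) N \<Longrightarrow> N = U i"
  using reds_irreducible irreducible_U by blast

lemma reds_Pi_inv:
  "reds \<Delta> (Pi A B) N \<Longrightarrow> \<exists>A' B'. N = Pi A' B' \<and> reds \<Delta> A A' \<and> reds \<Delta> B B'"
proof (induction rule: reds_induct)
  case (step y z)
  then obtain A' B' where "y = Pi A' B'" "reds \<Delta> A A'" "reds \<Delta> B B'" by auto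
  with step(2) show ?case by (cases rule: red.cases) (auto intro: reds_step)
qed auto

lemma reds_Lab_inv: "reds \<Delta> (Lab l Ms) N \<Longrightarrow> \<exists>Ms'. N = Lab l Ms'"
proof (induction rule: reds_induct)
  case (step y z)
  with step(2) show ?case by (auto elim: red.cases)
qed auto

lemma reds_value: "reds \<Delta> M N \<Longrightarrow> is_value M \<Longrightarrow> is_value N"
  unfolding is_value_def by (metis reds_U reds_Pi_inv reds_Lab_inv)

lemma WN_val_neutral_expand: "WN_val_neutral \<Delta> N \<Longrightarrow> reds \<Delta> M N \<Longrightarrow> WN_val_neutral \<Delta> M"
  by (auto simp: WN_val_neutral_def intro: reds_trans)

lemma WN_reds: "WN \<Delta> M \<Longrightarrow> reds \<Delta> M N \<Longrightarrow> lctx_ok \<Delta> \<Longrightarrow> WN \<Delta> N"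
  unfolding WN_def by (metis reds_confluent reds_irreducible)

lemma WN_val_neutral_reds:
  "WN_val_neutral \<Delta> M \<Longrightarrow> reds \<Delta> M N \<Longrightarrow> lctx_ok \<Delta> \<Longrightarrow> WN_val_neutral \<Delta> N"
  unfolding WN_val_neutral_def by (metis reds_confluent reds_irreducible)

lemma WN_neutral_val_neutral: "WN_neutral \<Delta> M \<Longrightarrow> WN_val_neutral \<Delta> M"
  by (auto simp: WN_neutral_def WN_val_neutral_def)

lemma WN_val_neutral_WN: "WN_val_neutral \<Delta> M \<Longrightarrow> WN \<Delta> M"
  by (auto simp: WN_val_neutral_def WN_def)

lemma WN_neutral_Var: "WN_neutral \<Delta> (Var i)"
  unfolding WN_neutral_def by (intro exI[of _ "Var i"]) (simp add: irreducible_Var)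

lemma WN_neutral_App: "WN_neutral \<Delta> M \<Longrightarrow> WN \<Delta> N \<Longrightarrow> WN_neutral \<Delta> (App M N)"
  unfolding WN_neutral_def WN_def by (auto intro!: reds_App irreducible_App_neutral)

lemma WN_val_neutral_Pi: "WN_val_neutral \<Delta> A \<Longrightarrow> WN \<Delta> B \<Longrightarrow> WN_val_neutral \<Delta> (Pi A B)"
  unfolding WN_val_neutral_def WN_def is_value_def by (blast intro: reds_Pi irreducible_Pi)

lemma WN_val_neutral_Lab:
  assumes "\<And>M. M \<in> set Ms \<Longrightarrow> WN \<Delta> M"
  shows "WN_val_neutral \<Delta> (Lab l Ms)"
proof -
  have "\<forall>M\<in>set Ms. \<exists>v. reds \<Delta> M v \<and> irreducible \<Delta> v"
    using assms by (simp add: WN_def)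
  then obtain vs where vs: "list_all2 (\<lambda>M v. reds \<Delta> M v \<and> irreducible \<Delta> v) Ms vs"
    by (induction Ms) auto
  then have "list_all2 (reds \<Delta>) Ms vs"
    by (auto simp: list_all2_conv_all_nth)
  then have "reds \<Delta> (Lab l Ms) (Lab l vs)"
    by (rule reds_Lab)
  moreover have "irreducible \<Delta> (Lab l vs)"
    using vs by (intro irreducible_Lab) (auto simp: list_all2_conv_all_nth in_set_conv_nth)
  ultimately show ?thesis by (auto simp: WN_val_neutral_def is_value_def)
qed

lemma WN_ren_reflect: "WN \<Delta> (ren f M) \<Longrightarrow> lctx_ok \<Delta> \<Longrightarrow> WN \<Delta> M"
proof -
  assume "WN \<Delta> (ren f M)" and ok: "lctx_ok \<Delta>"
  then obtain v where "reds \<Delta> (ren f M) v" and v: "irreducible \<Delta> v" by (auto simp: WN_def)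
  with ok obtain N where N: "reds \<Delta> M N" "v = ren f N" by (auto dest: reds_ren_reflect)
  have "irreducible \<Delta> N"
    using v N(2) red_subst[OF _ ok, of N _ "Var \<circ> f"] by (auto simp: irreducible_def ren_eq_subst)
  with N(1) show "WN \<Delta> M" by (auto simp: WN_def)
qed

lemma joinable_sym: "joinable \<Delta> M N \<Longrightarrow> joinable \<Delta> N M"
  by (auto simp: joinable_def)

lemma reds_joinable: "reds \<Delta> M N \<Longrightarrow> joinable \<Delta> M N"
  by (auto simp: joinable_def)

lemma joinable_subst: "joinable \<Delta> M N \<Longrightarrow> lctx_ok \<Delta> \<Longrightarrow> joinable \<Delta> (subst \<sigma> M) (subst \<sigma> N)"
  by (auto simp: joinable_def intro: reds_subst)

lemma joinable_reducts:
  assumes "joinable \<Delta> M N" "reds \<Delta> M M'" "reds \<Delta> N N'" "lctx_ok \<Delta>"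
  shows "joinable \<Delta> M' N'"
proof -
  obtain P where P: "reds \<Delta> M P" "reds \<Delta> N P" using assms(1) by (auto simp: joinable_def)
  obtain Q where "reds \<Delta> M' Q" "reds \<Delta> P Q"
    using reds_confluent[OF assms(2) P(1) assms(4)] by blast
  moreover obtain R where "reds \<Delta> N' R" "reds \<Delta> P R"
    using reds_confluent[OF assms(3) P(2) assms(4)] by blast
  moreover note reds_confluent[OF \<open>reds \<Delta> P Q\<close> \<open>reds \<Delta> P R\<close> assms(4)]
  ultimately show ?thesis by (auto simp: joinable_def intro: reds_trans)
qed

lemma joinable_irreducible: "joinable \<Delta> M N \<Longrightarrow> irreducible \<Delta> N \<Longrightarrow> reds \<Delta> M N"
  by (auto simp: joinable_def dest: reds_irreducible)

lemma joinable_U_U: "joinable \<Delta> (U i) (U j) \<Longrightarrow> i = j"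
  by (auto simp: joinable_def dest!: reds_U)

lemma joinable_U_Pi: "\<not> joinable \<Delta> (U i) (Pi A B)"
  by (auto simp: joinable_def dest!: reds_U reds_Pi_inv)

lemma joinable_U_Lab: "\<not> joinable \<Delta> (U i) (Lab l Ms)"
  by (auto simp: joinable_def dest!: reds_U reds_Lab_inv)

lemma joinable_Pi_Lab: "\<not> joinable \<Delta> (Pi A B) (Lab l Ms)"
  by (auto simp: joinable_def dest!: reds_Pi_inv reds_Lab_inv)

lemma joinable_Pi_Pi: "joinable \<Delta> (Pi A B) (Pi A' B') \<Longrightarrow> joinable \<Delta> A A' \<and> joinable \<Delta> B B'"
  by (auto simp: joinable_def dest!: reds_Pi_inv)

lemma joinable_value_neutral:
  "is_value V \<Longrightarrow> neutral N \<Longrightarrow> irreducible \<Delta> N \<Longrightarrow> \<not> joinable \<Delta> V N"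
  by (cases N) (auto simp: is_value_def dest!: joinable_irreducible reds_value)

section \<open>Interpretation of types\<close>

text \<open>\<open>R j\<close> stands for the interpretation at a lower level \<open>j < i\<close>, which gives the meaning of the
  universe \<open>U j\<close>.\<close>
inductive interp_lvl :: "lctx \<Rightarrow> (nat \<Rightarrow> trm \<Rightarrow> trm set \<Rightarrow> bool) \<Rightarrow> nat \<Rightarrow> trm \<Rightarrow> trm set \<Rightarrow> bool"
  for \<Delta> R i where
  interp_lvl_U: "reds \<Delta> T (U j) \<Longrightarrow> j < i \<Longrightarrow> interp_lvl \<Delta> R i T {X. \<exists>S. R j X S}"
| interp_lvl_Pi: "reds \<Delta> T (Pi A B) \<Longrightarrow> interp_lvl \<Delta> R i A SA \<Longrightarrow>
    (\<forall>a\<in>SA. interp_lvl \<Delta> R i (subst (inst [a]) B) (F a)) \<Longrightarrow> WN \<Delta> B \<Longrightarrow>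
    interp_lvl \<Delta> R i T {f. WN_val_neutral \<Delta> f \<and> (\<forall>a\<in>SA. App f a \<in> F a)}"
| interp_lvl_neutral: "reds \<Delta> T N \<Longrightarrow> neutral N \<Longrightarrow> irreducible \<Delta> N \<Longrightarrow>
    interp_lvl \<Delta> R i T {M. WN_val_neutral \<Delta> M}"

primrec interp_below :: "lctx \<Rightarrow> nat \<Rightarrow> nat \<Rightarrow> trm \<Rightarrow> trm set \<Rightarrow> bool" where
  "interp_below \<Delta> 0 = (\<lambda>j T S. False)"
| "interp_below \<Delta> (Suc n) = (\<lambda>j T S.
     if j < n then interp_below \<Delta> n j T S else j = n \<and> interp_lvl \<Delta> (interp_below \<Delta> n) n T S)"

definition interp :: "lctx \<Rightarrow> nat \<Rightarrow> trm \<Rightarrow> trm set \<Rightarrow> bool" where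
  "interp \<Delta> i = interp_lvl \<Delta> (interp_below \<Delta> i) i"

definition candidate :: "lctx \<Rightarrow> trm set \<Rightarrow> bool" where
  "candidate \<Delta> S \<longleftrightarrow> (\<forall>M\<in>S. WN_val_neutral \<Delta> M) \<and> (\<forall>M. WN_neutral \<Delta> M \<longrightarrow> M \<in> S)
     \<and> (\<forall>M M'. reds \<Delta> M M' \<longrightarrow> (M \<in> S \<longleftrightarrow> M' \<in> S))"

lemma interp_below_eq: "j < n \<Longrightarrow> interp_below \<Delta> n j = interp \<Delta> j"
proof (induction n)
  case (Suc n)
  then consider "j < n" | "j = n" by linarith
  then show ?case using Suc by cases (auto simp: fun_eq_iff interp_def)
qed simp

lemma interp_lvl_expand: "interp_lvl \<Delta> R i T' S \<Longrightarrow> reds \<Delta> T T' \<Longrightarrow> interp_lvl \<Delta> R i T S"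
  by (cases rule: interp_lvl.cases) (auto intro: interp_lvl.intros reds_trans)

lemma interp_lvl_reds:
  "interp_lvl \<Delta> R i T S \<Longrightarrow> reds \<Delta> T T' \<Longrightarrow> lctx_ok \<Delta> \<Longrightarrow> interp_lvl \<Delta> R i T' S"
proof (induction arbitrary: T' rule: interp_lvl.induct)
  case (interp_lvl_U T j)
  then obtain P where "reds \<Delta> (U j) P" "reds \<Delta> T' P" using reds_confluent by blast
  with interp_lvl_U show ?case by (auto dest: reds_U intro: interp_lvl.interp_lvl_U)
next
  case (interp_lvl_Pi T A B SA F)
  then obtain P where "reds \<Delta> (Pi A B) P" "reds \<Delta> T' P" using reds_confluent by blast
  then obtain A' B' where "reds \<Delta> T' (Pi A' B')" "reds \<Delta> A A'" "reds \<Delta> B B'"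
    by (auto dest: reds_Pi_inv)
  with interp_lvl_Pi show ?case
    by (auto intro!: interp_lvl.interp_lvl_Pi intro: reds_subst WN_reds)
next
  case (interp_lvl_neutral T N)
  then obtain P where "reds \<Delta> N P" "reds \<Delta> T' P" using reds_confluent by blast
  with interp_lvl_neutral show ?case
    by (auto dest: reds_irreducible intro: interp_lvl.interp_lvl_neutral)
qed

lemma interp_lvl_WN_val_neutral: "interp_lvl \<Delta> R i T S \<Longrightarrow> WN_val_neutral \<Delta> T"
proof (induction rule: interp_lvl.induct)
  case (interp_lvl_U T j)
  then show ?case using irreducible_U by (auto simp: WN_val_neutral_def is_value_def)
next
  case (interp_lvl_Pi T A B SA F)
  then show ?case by (meson WN_val_neutral_Pi WN_val_neutral_expand)
qed (auto simp: WN_val_neutral_def)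

lemma interp_lvl_not_reds_Lab:
  assumes "interp_lvl \<Delta> R i T S" "reds \<Delta> T (Lab l Ms)" "lctx_ok \<Delta>"
  shows False
proof -
  have join: "joinable \<Delta> H (Lab l Ms)" if "reds \<Delta> T H" for H
    using joinable_reducts[of \<Delta> T T, OF _ that assms(2,3)] by (simp add: reds_joinable)
  from assms(1) show False
  proof (cases rule: interp_lvl.cases)
    case (interp_lvl_neutral N)
    then show False
      using join[of N] joinable_value_neutral[of "Lab l Ms"]
      by (auto simp: is_value_def dest: joinable_sym)
  qed (use join joinable_U_Lab joinable_Pi_Lab in blast)+
qed

lemma interp_lvl_mono:
  "interp_lvl \<Delta> R i T S \<Longrightarrow> (\<And>j. j < i \<Longrightarrow> R j = R' j) \<Longrightarrow> i \<le> i' \<Longrightarrow> interp_lvl \<Delta> R' i' T S"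
proof (induction rule: interp_lvl.induct)
  case (interp_lvl_U T j)
  then show ?case using interp_lvl.interp_lvl_U[of \<Delta> T j i' R'] by simp
qed (auto intro: interp_lvl.intros)

lemma interp_lvl_Pi_inv:
  assumes "interp_lvl \<Delta> R i (Pi A B) S"
  obtains A' B' SA F where "reds \<Delta> (Pi A B) (Pi A' B')" "interp_lvl \<Delta> R i A' SA"
    "\<forall>a\<in>SA. interp_lvl \<Delta> R i (subst (inst [a]) B') (F a)" "WN \<Delta> B'"
    "S = {f. WN_val_neutral \<Delta> f \<and> (\<forall>a\<in>SA. App f a \<in> F a)}"
  using assms by (cases rule: interp_lvl.cases) (auto dest!: reds_Pi_inv reds_U)

lemma interp_lvl_joinable_U:
  assumes "interp_lvl \<Delta> R i T S" "joinable \<Delta> T (U j)" "lctx_ok \<Delta>"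
  shows "j < i \<and> S = {X. \<exists>S. R j X S}"
proof -
  have join: "joinable \<Delta> H (U j)" if "reds \<Delta> T H" for H
    using joinable_reducts[OF assms(2) that reds_refl assms(3)] .
  from assms(1) show ?thesis
  proof (cases rule: interp_lvl.cases)
    case (interp_lvl_U j')
    then show ?thesis using join joinable_U_U by blast
  next
    case (interp_lvl_Pi A B SA F)
    then show ?thesis using join joinable_U_Pi joinable_sym by blast
  next
    case (interp_lvl_neutral N)
    then have "joinable \<Delta> (U j) N" using join joinable_sym by blast
    moreover have "is_value (U j)" by (simp add: is_value_def)
    ultimately show ?thesis using joinable_value_neutral interp_lvl_neutral by blast
  qed
qed

lemma interp_lvl_joinable_neutral:
  assumes "interp_lvl \<Delta> R i T S" "joinable \<Delta> T N" "neutral N" "irreducible \<Delta> N" "lctx_ok \<Delta>"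
  shows "S = {M. WN_val_neutral \<Delta> M}"
proof -
  have join: "joinable \<Delta> H N" if "reds \<Delta> T H" for H
    using joinable_reducts[OF assms(2) that reds_refl assms(5)] .
  from assms(1) show ?thesis
  proof (cases rule: interp_lvl.cases)
    case (interp_lvl_U j)
    moreover have "is_value (U j)" by (simp add: is_value_def)
    ultimately show ?thesis using join joinable_value_neutral assms(3,4) by blast
  next
    case (interp_lvl_Pi A B SA F)
    moreover have "is_value (Pi A B)" by (simp add: is_value_def)
    ultimately show ?thesis using join joinable_value_neutral assms(3,4) by blast
  qed
qed

lemma interp_lvl_unique:
  "interp_lvl \<Delta> R i T S \<Longrightarrow> interp_lvl \<Delta> R' i' T' S' \<Longrightarrow> joinable \<Delta> T T' \<Longrightarrow> lctx_ok \<Delta> \<Longrightarrow>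
   (\<And>j. j < i \<Longrightarrow> j < i' \<Longrightarrow> R j = R' j) \<Longrightarrow> S = S'"
proof (induction arbitrary: T' S' rule: interp_lvl.induct)
  case (interp_lvl_U T j)
  note prems = interp_lvl_U.prems
  have "joinable \<Delta> T' (U j)"
    using joinable_reducts[OF prems(2) interp_lvl_U.hyps(1) reds_refl prems(3)]
    by (rule joinable_sym)
  from interp_lvl_joinable_U[OF prems(1) this prems(3)]
  show ?case using interp_lvl_U.hyps(2) prems(4) by auto
next
  case (interp_lvl_neutral T N)
  note prems = interp_lvl_neutral.prems
  have "joinable \<Delta> T' N"
    using joinable_reducts[OF prems(2) interp_lvl_neutral.hyps(1) reds_refl prems(3)]
    by (rule joinable_sym)
  from interp_lvl_joinable_neutral[OF prems(1) this interp_lvl_neutral.hyps(2,3) prems(3)]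
  show ?case by simp
next
  case (interp_lvl_Pi T A B SA F)
  note hyps = interp_lvl_Pi.hyps and IH = interp_lvl_Pi.IH and prems = interp_lvl_Pi.prems
  let ?S = "{f. WN_val_neutral \<Delta> f \<and> (\<forall>a\<in>SA. App f a \<in> F a)}"
  have first: "interp_lvl \<Delta> R i T ?S"
    using IH(2) by (intro interp_lvl.interp_lvl_Pi[OF hyps(1,2) _ hyps(3)]) blast
  have join: "joinable \<Delta> T H" if "reds \<Delta> T' H" for H
    using joinable_reducts[OF prems(2) reds_refl that prems(3)] .
  from prems(1) show ?case
  proof (cases rule: interp_lvl.cases)
    case (interp_lvl_U j)
    with interp_lvl_joinable_U[OF first join prems(3)] prems(4) show ?thesis by auto
  next
    case (interp_lvl_neutral N)
    with interp_lvl_joinable_neutral[OF first join _ _ prems(3)] show ?thesis by simp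
  next
    case (interp_lvl_Pi A' B' SA' F')
    have "joinable \<Delta> (Pi A B) (Pi A' B')"
      using joinable_reducts[OF prems(2) hyps(1) interp_lvl_Pi(2) prems(3)] .
    then have A: "joinable \<Delta> A A'" and B: "joinable \<Delta> B B'" by (auto dest: joinable_Pi_Pi)
    have SA: "SA = SA'"
      using IH(1)[OF interp_lvl_Pi(3) A prems(3,4)] .
    have "F a = F' a" if "a \<in> SA" for a
      using IH(2) interp_lvl_Pi(4) that SA
        joinable_subst[OF B prems(3)] prems(3,4)
      by blast
    with SA interp_lvl_Pi(1) show ?thesis by auto
  qed
qed

lemma interp_expand: "interp \<Delta> i T' S \<Longrightarrow> reds \<Delta> T T' \<Longrightarrow> interp \<Delta> i T S"
  unfolding interp_def by (rule interp_lvl_expand)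

lemma interp_reds: "interp \<Delta> i T S \<Longrightarrow> reds \<Delta> T T' \<Longrightarrow> lctx_ok \<Delta> \<Longrightarrow> interp \<Delta> i T' S"
  unfolding interp_def by (rule interp_lvl_reds)

lemma interp_WN_val_neutral: "interp \<Delta> i T S \<Longrightarrow> WN_val_neutral \<Delta> T"
  unfolding interp_def by (rule interp_lvl_WN_val_neutral)

lemma interp_not_reds_Lab: "interp \<Delta> i T S \<Longrightarrow> reds \<Delta> T (Lab l Ms) \<Longrightarrow> lctx_ok \<Delta> \<Longrightarrow> False"
  unfolding interp_def by (rule interp_lvl_not_reds_Lab)

lemma interp_neutral: "WN_neutral \<Delta> T \<Longrightarrow> interp \<Delta> i T {M. WN_val_neutral \<Delta> M}"
  unfolding interp_def WN_neutral_def by (auto intro: interp_lvl_neutral)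

lemma interp_cumulative: "interp \<Delta> i T S \<Longrightarrow> i \<le> i' \<Longrightarrow> interp \<Delta> i' T S"
  unfolding interp_def
  by (rule interp_lvl_mono[of \<Delta> "interp_below \<Delta> i" i T S "interp_below \<Delta> i'" i'])
    (auto simp: interp_below_eq)

lemma interp_U: "reds \<Delta> T (U j) \<Longrightarrow> j < i \<Longrightarrow> interp \<Delta> i T {X. \<exists>S. interp \<Delta> j X S}"
  unfolding interp_def using interp_lvl_U[of \<Delta> T j i "interp_below \<Delta> i"]
  by (simp add: interp_below_eq interp_def)

lemma interp_U_inv:
  assumes "interp \<Delta> k (U i) S"
  shows "S = {X. \<exists>S. interp \<Delta> i X S}"
proof -
  from assms have "interp_lvl \<Delta> (interp_below \<Delta> k) k (U i) S" by (simp add: interp_def)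
  then show ?thesis by (cases rule: interp_lvl.cases) (auto dest!: reds_U simp: interp_below_eq)
qed

lemma interp_Pi:
  "reds \<Delta> T (Pi A B) \<Longrightarrow> interp \<Delta> i A SA \<Longrightarrow> (\<forall>a\<in>SA. interp \<Delta> i (subst (inst [a]) B) (F a)) \<Longrightarrow>
   WN \<Delta> B \<Longrightarrow> interp \<Delta> i T {f. WN_val_neutral \<Delta> f \<and> (\<forall>a\<in>SA. App f a \<in> F a)}"
  unfolding interp_def by (rule interp_lvl_Pi)

lemma interp_Pi_inv:
  assumes "interp \<Delta> i (Pi A B) S"
  obtains A' B' SA F where "reds \<Delta> (Pi A B) (Pi A' B')" "interp \<Delta> i A' SA"
    "\<forall>a\<in>SA. interp \<Delta> i (subst (inst [a]) B') (F a)"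
    "S = {f. WN_val_neutral \<Delta> f \<and> (\<forall>a\<in>SA. App f a \<in> F a)}"
  using assms unfolding interp_def by (elim interp_lvl_Pi_inv)

lemma interp_unique:
  "interp \<Delta> i T S \<Longrightarrow> interp \<Delta> i' T' S' \<Longrightarrow> joinable \<Delta> T T' \<Longrightarrow> lctx_ok \<Delta> \<Longrightarrow> S = S'"
  unfolding interp_def
  by (erule interp_lvl_unique[of \<Delta> "interp_below \<Delta> i" i T S "interp_below \<Delta> i'" i'])
    (auto simp: interp_below_eq)

lemma interp_lvl_candidate:
  "interp_lvl \<Delta> R i T S \<Longrightarrow> lctx_ok \<Delta> \<Longrightarrow> (\<And>j. j < i \<Longrightarrow> R j = interp \<Delta> j) \<Longrightarrow> candidate \<Delta> S"
proof (induction rule: interp_lvl.induct)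
  case (interp_lvl_U T j)
  then show ?case
    by (auto simp: candidate_def
        intro: interp_WN_val_neutral interp_neutral interp_reds interp_expand)
next
  case (interp_lvl_Pi T A B SA F)
  then have SA: "candidate \<Delta> SA" and F: "\<And>a. a \<in> SA \<Longrightarrow> candidate \<Delta> (F a)"
    by auto
  have "App M a \<in> F a" if "WN_neutral \<Delta> M" "a \<in> SA" for M a
  proof -
    have "WN \<Delta> a" using SA that(2) by (auto simp: candidate_def intro: WN_val_neutral_WN)
    with that(1) have "WN_neutral \<Delta> (App M a)" by (rule WN_neutral_App)
    with F[OF that(2)] show ?thesis by (auto simp: candidate_def)
  qed
  moreover have "App M a \<in> F a \<longleftrightarrow> App M' a \<in> F a" if "reds \<Delta> M M'" "a \<in> SA" for M M' a
    using that F[of a] reds_App[OF that(1) reds_refl, of a] by (auto simp: candidate_def)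
  ultimately show ?case
    using interp_lvl_Pi.prems(1)
    by (auto simp: candidate_def WN_neutral_val_neutral
        intro: WN_val_neutral_reds WN_val_neutral_expand)
qed (auto simp: candidate_def WN_neutral_val_neutral
    intro: WN_val_neutral_reds WN_val_neutral_expand)

lemma interp_candidate: "interp \<Delta> i T S \<Longrightarrow> lctx_ok \<Delta> \<Longrightarrow> candidate \<Delta> S"
  unfolding interp_def
  by (erule interp_lvl_candidate[of \<Delta> "interp_below \<Delta> i" i]) (auto simp: interp_below_eq)

lemma interp_mem_WN: "interp \<Delta> i T S \<Longrightarrow> M \<in> S \<Longrightarrow> lctx_ok \<Delta> \<Longrightarrow> WN \<Delta> M"
  using interp_candidate by (auto simp: candidate_def intro: WN_val_neutral_WN)

lemma interp_Var_mem: "interp \<Delta> i T S \<Longrightarrow> lctx_ok \<Delta> \<Longrightarrow> Var j \<in> S"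
  using interp_candidate WN_neutral_Var by (auto simp: candidate_def)

lemma interp_App:
  assumes "interp \<Delta> k (Pi A B) SF" "f \<in> SF" "interp \<Delta> k' A SA" "a \<in> SA" "lctx_ok \<Delta>"
  shows "\<exists>S. interp \<Delta> k (subst (inst [a]) B) S \<and> App f a \<in> S"
proof -
  from assms(1) obtain A' B' SA' F where r: "reds \<Delta> (Pi A B) (Pi A' B')"
    and A': "interp \<Delta> k A' SA'" and F: "\<forall>a\<in>SA'. interp \<Delta> k (subst (inst [a]) B') (F a)"
    and SF: "SF = {f. WN_val_neutral \<Delta> f \<and> (\<forall>a\<in>SA'. App f a \<in> F a)}"
    by (rule interp_Pi_inv)
  from r have "reds \<Delta> A A'" "reds \<Delta> B B'" by (auto dest: reds_Pi_inv)
  then have "SA = SA'"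
    using interp_unique[OF assms(3) A' _ assms(5)] by (simp add: reds_joinable)
  then have "App f a \<in> F a" "interp \<Delta> k (subst (inst [a]) B') (F a)"
    using assms(2,4) SF F by auto
  moreover have "reds \<Delta> (subst (inst [a]) B) (subst (inst [a]) B')"
    using \<open>reds \<Delta> B B'\<close> assms(5) by (rule reds_subst)
  ultimately show ?thesis by (auto intro: interp_expand)
qed

lemma interp_subst_Pi:
  assumes A: "interp \<Delta> i (subst \<sigma> A) SA"
    and B: "\<And>a. a \<in> SA \<Longrightarrow> \<exists>S. interp \<Delta> i (subst (scons a \<sigma>) B) S"
    and ok: "lctx_ok \<Delta>"
  shows "\<exists>S. interp \<Delta> i (subst \<sigma> (Pi A B)) S"
proof -
  define F where "F a = (SOME S. interp \<Delta> i (subst (scons a \<sigma>) B) S)" for a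
  have F: "\<forall>a\<in>SA. interp \<Delta> i (subst (inst [a]) (subst (up \<sigma>) B)) (F a)"
    unfolding F_def subst_inst_single_up using B by (auto intro: someI_ex)
  txt \<open>\<open>Var 0\<close> inhabits \<open>SA\<close>, and that instance of the body is a renaming of the body.\<close>
  have "WN \<Delta> (subst (scons (Var 0) \<sigma>) B)"
    using B[OF interp_Var_mem[OF A ok, of 0]]
    by (blast intro: WN_val_neutral_WN interp_WN_val_neutral)
  then have "WN \<Delta> (subst (up \<sigma>) B)"
    unfolding subst_scons_Var0 using ok by (rule WN_ren_reflect)
  with A F show ?thesis
    by (auto intro: interp_Pi[OF reds_refl])
qed

section \<open>Semantic typing\<close>

locale reducibility =
  fixes D :: lctx
  assumes scoped_D: "lctx_scoped D"
begin

lemma ok_D: "lctx_ok D"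
  using scoped_D by (rule lctx_scoped_ok)

definition sem_subst :: "(nat \<Rightarrow> trm) \<Rightarrow> tctx \<Rightarrow> bool" where
  "sem_subst \<sigma> \<Gamma> \<longleftrightarrow>
     (\<forall>j<length \<Gamma>. \<exists>k S. interp D k (subst \<sigma> (ren (\<lambda>x. x + Suc j) (\<Gamma> ! j))) S \<and> \<sigma> j \<in> S)"

definition sem_typed :: "tctx \<Rightarrow> trm \<Rightarrow> trm \<Rightarrow> bool" where
  "sem_typed \<Gamma> M T \<longleftrightarrow> (\<forall>\<sigma>. sem_subst \<sigma> \<Gamma> \<longrightarrow> (\<exists>k S. interp D k (subst \<sigma> T) S \<and> subst \<sigma> M \<in> S))"

definition valid_lctx :: "lctx \<Rightarrow> bool" where
  "valid_lctx \<Delta> \<longleftrightarrow> (\<forall>(l, As, A, L, B) \<in> set \<Delta>.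
     (\<forall>\<sigma>. sem_subst \<sigma> (rev As) \<longrightarrow> (\<exists>k S. interp D k (subst \<sigma> (Pi A B)) S))
     \<and> sem_typed (A # rev As) L B)"

lemma sem_subst_cons:
  assumes "sem_subst \<sigma> \<Gamma>" "interp D k (subst \<sigma> A) S" "a \<in> S"
  shows "sem_subst (scons a \<sigma>) (A # \<Gamma>)"
  using assms by (auto simp: sem_subst_def subst_ren comp_def nth_Cons split: nat.splits)

lemma sem_subst_inst:
  assumes "scoped_ctx (rev As)" "length Ns = length As"
    and "\<forall>k<length Ns. \<exists>k' S. interp D k' (subst (inst (take k Ns)) (As ! k)) S \<and> Ns ! k \<in> S"
  shows "sem_subst (inst Ns) (rev As)"
  unfolding sem_subst_def
proof (intro allI impI)
  fix j assume j: "j < length (rev As)"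
  define k where "k = length Ns - Suc j"
  have k: "k < length Ns" "length Ns - k = Suc j" "rev As ! j = As ! k" "inst Ns j = Ns ! k"
    using j assms(2) by (simp_all add: k_def rev_nth inst_nth)
  have "subst (inst Ns) (ren (\<lambda>x. x + Suc j) (As ! k)) = subst (inst (take k Ns)) (As ! k)"
    unfolding subst_ren
  proof (rule subst_scoped_cong)
    show "scoped k (As ! k)" using assms(1,2) k(1) by (simp add: scoped_ctx_rev_nth)
  next
    fix x assume "x < k"
    then show "(inst Ns \<circ> (\<lambda>x. x + Suc j)) x = inst (take k Ns) x"
      using inst_add_take[of k Ns x] k by simp
  qed
  with assms(3) k show "\<exists>k S. interp D k (subst (inst Ns) (ren (\<lambda>x. x + Suc j) (rev As ! j))) S
      \<and> inst Ns j \<in> S"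
    by auto
qed

text \<open>The \<open>\<eta>\<close>-cases of equivalence are vacuous here: a type reducing to a label has no
  interpretation.\<close>
lemma interp_equiv:
  assumes "equiv \<Delta> A B" "set \<Delta> \<subseteq> set D"
    and "interp D k (subst \<sigma> A) S" "interp D k' (subst \<sigma> B) S'"
  shows "S = S'"
  using assms(1)
proof (cases rule: equiv.cases)
  case (common C)
  then have "joinable D (subst \<sigma> A) (subst \<sigma> B)"
    using assms(2) ok_D by (auto simp: joinable_def intro!: reds_subst dest: reds_lctx_mono)
  then show ?thesis by (rule interp_unique[OF assms(3,4) _ ok_D])
next
  case (eta1 l Ns _)
  then have "reds D (subst \<sigma> A) (Lab l (map (subst \<sigma>) Ns))"
    using assms(2) ok_D reds_subst[of D A "Lab l Ns" \<sigma>] by (auto dest: reds_lctx_mono)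
  with assms(3) ok_D show ?thesis by (blast dest: interp_not_reds_Lab)
next
  case (eta2 l Ns _)
  then have "reds D (subst \<sigma> B) (Lab l (map (subst \<sigma>) Ns))"
    using assms(2) ok_D reds_subst[of D B "Lab l Ns" \<sigma>] by (auto dest: reds_lctx_mono)
  with assms(4) ok_D show ?thesis by (blast dest: interp_not_reds_Lab)
qed

lemma sem_typed_univ_interp:
  "sem_typed \<Gamma> A (U i) \<Longrightarrow> sem_subst \<sigma> \<Gamma> \<Longrightarrow> \<exists>S. interp D i (subst \<sigma> A) S"
  by (auto simp: sem_typed_def dest!: interp_U_inv)

lemma sem_typed_Var: "i < length \<Gamma> \<Longrightarrow> sem_typed \<Gamma> (Var i) (ren (\<lambda>j. j + Suc i) (\<Gamma> ! i))"
  by (auto simp: sem_typed_def sem_subst_def)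

lemma sem_typed_U: "sem_typed \<Gamma> (U i) (U (Suc i))"
proof -
  have "interp D (Suc (Suc i)) (U (Suc i)) {X. \<exists>S. interp D (Suc i) X S}"
    and "interp D (Suc i) (U i) {X. \<exists>S. interp D i X S}"
    by (auto intro: interp_U)
  then show ?thesis by (auto simp: sem_typed_def)
qed

lemma sem_typed_Pi:
  assumes A: "sem_typed \<Gamma> A (U i)" and B: "sem_typed (A # \<Gamma>) B (U j)"
  shows "sem_typed \<Gamma> (Pi A B) (U (max i j))"
  unfolding sem_typed_def
proof (intro allI impI)
  fix \<sigma> assume \<sigma>: "sem_subst \<sigma> \<Gamma>"
  then obtain SA where SA: "interp D i (subst \<sigma> A) SA"
    using sem_typed_univ_interp[OF A] by blast
  have "\<exists>S. interp D (max i j) (subst \<sigma> (Pi A B)) S"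
  proof (rule interp_subst_Pi[OF _ _ ok_D])
    show "interp D (max i j) (subst \<sigma> A) SA"
      using SA by (simp add: interp_cumulative)
  next
    fix a assume "a \<in> SA"
    with \<sigma> SA have "sem_subst (scons a \<sigma>) (A # \<Gamma>)" by (rule sem_subst_cons)
    then show "\<exists>S. interp D (max i j) (subst (scons a \<sigma>) B) S"
      using sem_typed_univ_interp[OF B] by (meson interp_cumulative max.cobounded2)
  qed
  moreover have "interp D (Suc (max i j)) (U (max i j)) {X. \<exists>S. interp D (max i j) X S}"
    by (auto intro: interp_U)
  ultimately show "\<exists>k S. interp D k (subst \<sigma> (U (max i j))) S \<and> subst \<sigma> (Pi A B) \<in> S"
    by auto
qed

lemma sem_typed_App:
  assumes M: "sem_typed \<Gamma> M (Pi A B)" and N: "sem_typed \<Gamma> N A"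
  shows "sem_typed \<Gamma> (App M N) (subst (inst [N]) B)"
  unfolding sem_typed_def
proof (intro allI impI)
  fix \<sigma> assume \<sigma>: "sem_subst \<sigma> \<Gamma>"
  then obtain k SF k' SA where "interp D k (Pi (subst \<sigma> A) (subst (up \<sigma>) B)) SF" "subst \<sigma> M \<in> SF"
    "interp D k' (subst \<sigma> A) SA" "subst \<sigma> N \<in> SA"
    using M N by (fastforce simp: sem_typed_def)
  then have "\<exists>S. interp D k (subst (inst [subst \<sigma> N]) (subst (up \<sigma>) B)) S
      \<and> App (subst \<sigma> M) (subst \<sigma> N) \<in> S"
    using ok_D by (rule interp_App)
  then show "\<exists>k S. interp D k (subst \<sigma> (subst (inst [N]) B)) S \<and> subst \<sigma> (App M N) \<in> S"
    by (auto simp: subst_subst_inst_single subst_inst_single_up)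
qed

lemma sem_typed_conv:
  assumes "sem_typed \<Gamma> M A" "equiv \<Delta> A B" "set \<Delta> \<subseteq> set D" "sem_typed \<Gamma> B (U i)"
  shows "sem_typed \<Gamma> M B"
  unfolding sem_typed_def
proof (intro allI impI)
  fix \<sigma> assume \<sigma>: "sem_subst \<sigma> \<Gamma>"
  then obtain k S S' where "interp D k (subst \<sigma> A) S" "subst \<sigma> M \<in> S" "interp D i (subst \<sigma> B) S'"
    using assms(1) sem_typed_univ_interp[OF assms(4)] by (fastforce simp: sem_typed_def)
  with interp_equiv[OF assms(2,3)] show "\<exists>k S. interp D k (subst \<sigma> B) S \<and> subst \<sigma> M \<in> S"
    by blast
qed

lemma interp_Lab:
  assumes e: "(l, As, A, L, B) \<in> set D"
    and Pi: "\<forall>\<sigma>. sem_subst \<sigma> (rev As) \<longrightarrow> (\<exists>k S. interp D k (subst \<sigma> (Pi A B)) S)"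
    and body: "sem_typed (A # rev As) L B"
    and len: "length Ns = length As"
    and args: "\<forall>k<length Ns. \<exists>k' S. interp D k' (subst (inst (take k Ns)) (As ! k)) S \<and> Ns ! k \<in> S"
  shows "\<exists>k S. interp D k (subst (inst Ns) (Pi A B)) S \<and> Lab l Ns \<in> S"
proof -
  have "scoped_ctx (rev As)" using scoped_D e by (auto simp: lctx_scoped_def)
  then have \<sigma>: "sem_subst (inst Ns) (rev As)" using len args by (rule sem_subst_inst)
  with Pi obtain k S where T: "interp D k (Pi (subst (inst Ns) A) (subst (up (inst Ns)) B)) S"
    by fastforce
  then obtain A' B' SA F
    where r: "reds D (Pi (subst (inst Ns) A) (subst (up (inst Ns)) B)) (Pi A' B')"
    and A': "interp D k A' SA" and F: "\<forall>a\<in>SA. interp D k (subst (inst [a]) B') (F a)"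
    and S: "S = {f. WN_val_neutral D f \<and> (\<forall>a\<in>SA. App f a \<in> F a)}"
    by (rule interp_Pi_inv)
  from r have rA: "reds D (subst (inst Ns) A) A'" and rB: "reds D (subst (up (inst Ns)) B) B'"
    by (auto dest: reds_Pi_inv)
  have "WN_val_neutral D (Lab l Ns)"
    using args ok_D
    by (intro WN_val_neutral_Lab) (auto simp: in_set_conv_nth intro: interp_mem_WN)
  moreover have "App (Lab l Ns) a \<in> F a" if a: "a \<in> SA" for a
  proof -
    have "interp D k (subst (inst Ns) A) SA" using A' rA by (rule interp_expand)
    with \<sigma> have "sem_subst (inst (Ns @ [a])) (A # rev As)"
      unfolding inst_snoc using a by (rule sem_subst_cons)
    with body obtain k'' S'' where B'': "interp D k'' (subst (inst (Ns @ [a])) B) S''"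
      and L: "subst (inst (Ns @ [a])) L \<in> S''"
      by (auto simp: sem_typed_def)
    have "reds D (subst (inst (Ns @ [a])) B) (subst (inst [a]) B')"
      unfolding inst_snoc subst_inst_single_up[symmetric] using rB ok_D by (rule reds_subst)
    then have "S'' = F a"
      using interp_unique[OF B'' _ _ ok_D] F a by (meson reds_joinable)
    moreover have "red D (App (Lab l Ns) a) (subst (inst (Ns @ [a])) L)"
      using e len by (rule red.beta)
    ultimately show ?thesis
      using L interp_candidate[OF B'' ok_D] by (auto simp: candidate_def dest: red_reds)
  qed
  ultimately have "Lab l Ns \<in> S" using S by simp
  with T show ?thesis by auto
qed

lemma sem_typed_Lab:
  assumes e: "(l, As, A, L, B) \<in> set \<Delta>" and "valid_lctx \<Delta>" "set \<Delta> \<subseteq> set D"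
    and len: "length Ms = length As"
    and args: "\<forall>k<length Ms. sem_typed \<Gamma> (Ms ! k) (subst (inst (take k Ms)) (As ! k))"
  shows "sem_typed \<Gamma> (Lab l Ms) (Pi (subst (inst Ms) A) (subst (up (inst Ms)) B))"
  unfolding sem_typed_def
proof (intro allI impI)
  fix \<sigma> assume \<sigma>: "sem_subst \<sigma> \<Gamma>"
  have eD: "(l, As, A, L, B) \<in> set D" using e assms(3) by blast
  then have As: "scoped_ctx (rev As)" and "scoped (length As) (Pi A B)"
    using scoped_D by (auto simp: lctx_scoped_def)
  then have T: "subst \<sigma> (Pi (subst (inst Ms) A) (subst (up (inst Ms)) B))
      = subst (inst (map (subst \<sigma>) Ms)) (Pi A B)"
    using subst_subst_inst[of Ms "Pi A B" \<sigma>] len by simp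
  have "\<exists>k' S. interp D k' (subst (inst (take k (map (subst \<sigma>) Ms))) (As ! k)) S
      \<and> map (subst \<sigma>) Ms ! k \<in> S" if k: "k < length (map (subst \<sigma>) Ms)" for k
  proof -
    have "scoped (length (take k Ms)) (As ! k)"
      using k len scoped_ctx_rev_nth[OF As] by simp
    then show ?thesis
      using args k \<sigma> by (auto simp: sem_typed_def subst_subst_inst take_map)
  qed
  with interp_Lab[OF eD] assms(2) e len
  show "\<exists>k S. interp D k (subst \<sigma> (Pi (subst (inst Ms) A) (subst (up (inst Ms)) B))) S
      \<and> subst \<sigma> (Lab l Ms) \<in> S"
    unfolding T by (auto simp: valid_lctx_def)
qed

lemma valid_lctx_snoc:
  assumes "valid_lctx \<Delta>" "sem_typed (rev As) (Pi A B) (U i)" "sem_typed (A # rev As) L B"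
  shows "valid_lctx (\<Delta> @ [(l, As, A, L, B)])"
proof -
  have "\<forall>\<sigma>. sem_subst \<sigma> (rev As) \<longrightarrow> (\<exists>k S. interp D k (subst \<sigma> (Pi A B)) S)"
    using sem_typed_univ_interp[OF assms(2)] by blast
  with assms(1,3) show ?thesis by (simp add: valid_lctx_def)
qed

theorem fundamental:
  shows "typing \<Delta> \<Gamma> M T \<Longrightarrow> set \<Delta> \<subseteq> set D \<Longrightarrow> valid_lctx \<Delta> \<and> sem_typed \<Gamma> M T"
    and "wf \<Delta> \<Gamma> \<Longrightarrow> set \<Delta> \<subseteq> set D \<Longrightarrow> valid_lctx \<Delta>"
proof (induction rule: typing_wf.inducts)
  case (t_var i \<Gamma> \<Delta>)
  then show ?case using sem_typed_Var by blast
next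
  case (t_univ \<Delta> \<Gamma> i)
  then show ?case using sem_typed_U by blast
next
  case (t_pi \<Delta> \<Gamma> A i B j)
  then show ?case by (simp add: sem_typed_Pi)
next
  case (t_app \<Delta> \<Gamma> M A B N)
  then show ?case by (simp add: sem_typed_App)
next
  case (t_conv \<Delta> \<Gamma> M A B i)
  then show ?case by (blast intro: sem_typed_conv)
next
  case (t_lab \<Delta> \<Gamma> l As A L B Ms)
  then show ?case by (simp add: sem_typed_Lab)
next
  case (wf_lab l \<Delta> As A B i L)
  then show ?case by (simp add: valid_lctx_snoc)
qed (simp_all add: valid_lctx_def)

end

lemma neutral_not_scoped_0: "neutral M \<Longrightarrow> \<not> scoped 0 M"
  by (induction M rule: neutral.induct) auto

theorem theorem3p23:
  assumes "typing \<Delta> [] M A"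
  shows "\<exists>v. reds \<Delta> M v \<and> is_value v \<and> irreducible \<Delta> v"
proof -
  have \<Delta>: "lctx_scoped \<Delta>" and M: "scoped 0 M"
    using typing_scoped(1)[OF assms] by auto
  interpret reducibility \<Delta> using \<Delta> by unfold_locales
  have "sem_subst Var []" by (simp add: sem_subst_def)
  with fundamental(1)[OF assms] obtain k S where "interp \<Delta> k A S" "M \<in> S"
    by (auto simp: sem_typed_def subst_Var)
  then have "WN_val_neutral \<Delta> M"
    using interp_candidate ok_D by (auto simp: candidate_def)
  then obtain v where v: "reds \<Delta> M v" "irreducible \<Delta> v" "is_value v \<or> neutral v"
    by (auto simp: WN_val_neutral_def)
  moreover have "scoped 0 v" using reds_scoped[OF v(1) ok_D M] .
  ultimately show ?thesis using neutral_not_scoped_0 by blast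
qed

end
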